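(* In an execution of Algorithm A1 (described in the context) with $n>3t$ and a weak common coin, if at the start of some round $r$ all non-faulty processes have the same estimate $\mathit{est}=v\in\{0,1\}$, then every non-faulty process decides $v$ in round $r$ (if it has not already decided), and no non-faulty process ever decides a value different from $v$ in any later round.
   Context: System model: $n$ asynchronous sequential processes $p_1,\dots,p_n$, of which at most $t$ are Byzantine (behave arbitrarily, may collude); the others are non-faulty. Processes communicate over reliable asynchronous point-to-point channels between every pair: messages between non-faulty processes are eventually delivered, unaltered, not duplicated, and the receiver knows the identity of the sender; there is no bound on delays and the adversary controls delivery order. "Broadcast $m$" means sending $m$ to every process (including oneself). When counting messages "received from $k$ distinct processes", at most one message per sender is counted. BV-Broadcast with tag $T$ and input $v$ at process $p_i$: set $\mathit{bin}_i\leftarrow\emptyset$; broadcast $\mathrm{BVAL}(T,v)$; return (a reference to) $\mathit{bin}_i$, which may keep growing afterwards. In the background, for every value $x$: when $\mathrm{BVAL}(T,x)$ has been received from $t+1$ distinct processes and $p_i$ has not yet broadcast $\mathrm{BVAL}(T,x)$, $p_i$ broadcasts $\mathrm{BVAL}(T,x)$; when $\mathrm{BVAL}(T,x)$ has been received from $2t+1$ distinct processes, $p_i$ adds $x$ to $\mathit{bin}_i$. SBV-Broadcast with tag $T$ and input $v$ at $p_i$: $\mathit{bin}_i\leftarrow$ BV-Broadcast with tag $T$ and input $v$; wait until $\mathit{bin}_i\neq\emptyset$; broadcast $\mathrm{AUX}(T,w)$ for some $w\in\mathit{bin}_i$; wait until there are $n-t$ distinct processes $p_j$ from which a message $\mathrm{AUX}(T,w_j)$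 has been received with $w_j\in \mathit{bin}_i$ (the current value of the growing set); let $\mathit{view}_i$ be the set of these values $w_j$; return $(\mathit{view}_i,\mathit{bin}_i)$ ($\mathit{view}_i$ is fixed upon return, $\mathit{bin}_i$ may still grow). Weak common coin with parameter $d\ge 2$: for each round $r$, a call $\mathsf{random}()$ in round $r$ returns a bit to each non-faulty caller; with probability $1/d$ all non-faulty processes get $0$, with probability $1/d$ all get $1$, and with probability $(d-2)/d$ they may get different values. The round-$r$ output is random and unpredictable, and is not revealed to anyone before at least one non-faulty process has called $\mathsf{random}()$ in round $r$. Algorithm A1 (binary consensus), at non-faulty $p_i$ proposing $v_i\in\{0,1\}$: set $\mathit{est}\leftarrow v_i$, $r\leftarrow 0$. Repeat forever: (1) $r\leftarrow r+1$. (2) $(\mathit{view}_0,\mathit{bin})\leftarrow$ SBV-Broadcast with tag $(r,0)$ and input $\mathit{est}$. (3) Broadcast $\mathrm{AUXSET}(r,\mathit{view}_0)$. (4) Wait until there are $n-t$ distinct processes $p_j$ from which a message $\mathrm{AUXSET}(r,S_j)$ has been received with $S_j\subseteq\mathit{bin}$ (current value), and let $\mathit{view}_1=\bigcup_j S_j$. (5) If $\mathit{view}_1=\{w\}$ then $\mathit{est}\leftarrow w$, else $\mathit{est}\leftarrow\bot$. (6) $(\mathit{view}_2,\_)\leftarrow$ SBV-Broadcast with tag $(r,1)$ and input $\mathit{est}\in\{0,1,\bot\}$. (7) $s\leftarrow\mathsf{random}()$. (8) If $\mathit{view}_2=\{v\}$ with $v\neq\bot$: $\mathit{est}\leftarrow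 v$ and decide $v$ if not yet decided; if $\mathit{view}_2=\{v,\bot\}$ with $v\in\{0,1\}$: $\mathit{est}\leftarrow v$; if $\mathit{view}_2=\{\bot\}$: $\mathit{est}\leftarrow s$. *)

theory Defs
  imports Main
begin

text \<open>Processes are the naturals below n. Values are of type bool option:
  Some False = 0, Some True = 1, None = bot. A tag is a pair (r, k) with k in {0,1}.\<close>

datatype msg =
    BVAL "nat \<times> nat" "bool option"
  | AUX "nat \<times> nat" "bool option"
  | AUXSET nat "bool option set"

text \<open>Program locations of a non-faulty process (waiting points of A1).
  Start: about to execute step (1) of the next round.
  WBin0: inside SBV-Broadcast of tag (r,0), waiting for bin nonempty.
  WAux0: waiting for n-t AUX messages of tag (r,0).
  WAuxSet: step (4), waiting for n-t AUXSET messages.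
  WBin1 / WAux1: the same two waits inside SBV-Broadcast of tag (r,1).\<close>

datatype pcv = Start | WBin0 | WAux0 | WAuxSet | WBin1 | WAux1

record lstate =
  rnd :: nat
  pc :: pcv
  est :: "bool option"
  bin :: "nat \<times> nat \<Rightarrow> bool option set"
  invoked :: "(nat \<times> nat) set"
  bsent :: "((nat \<times> nat) \<times> bool option) set"
  rcv :: "(nat \<times> msg) set"
  dec :: "(bool \<times> nat) option"

text \<open>net: set of messages (source, destination, message) that were sent.\<close>
record gstate =
  net :: "(nat \<times> nat \<times> msg) set"
  loc :: "nat \<Rightarrow> lstate"

datatype action =
    Main nat
  | Echo nat "nat \<times> nat" "bool option"
  | AddBin nat "nat \<times> nat" "bool option"
  | Deliver nat nat msg
  | Byz nat nat msg
  | Stutter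

definition init_loc :: "bool \<Rightarrow> lstate" where
  "init_loc b = \<lparr>rnd = 0, pc = Start, est = Some b, bin = (\<lambda>_. {}), invoked = {},
                 bsent = {}, rcv = {}, dec = None\<rparr>"

definition init_state :: "(nat \<Rightarrow> bool) \<Rightarrow> gstate" where
  "init_state inp = \<lparr>net = {}, loc = (\<lambda>i. init_loc (inp i))\<rparr>"

definition set_loc :: "nat \<Rightarrow> lstate \<Rightarrow> gstate \<Rightarrow> gstate" where
  "set_loc i l g = g\<lparr>loc := (loc g)(i := l)\<rparr>"

definition send_all :: "nat \<Rightarrow> nat \<Rightarrow> msg \<Rightarrow> gstate \<Rightarrow> gstate" where
  "send_all n i m g = g\<lparr>net := net g \<union> {(i, j, m) | j. j < n}\<rparr>"

text \<open>Invocation of BV-Broadcast with tag T and input x (local part):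
  bin_T := empty, the background task for T is started, BVAL(T,x) is recorded as broadcast.\<close>
definition bv_start :: "nat \<times> nat \<Rightarrow> bool option \<Rightarrow> lstate \<Rightarrow> lstate" where
  "bv_start T x l = l\<lparr>bin := (bin l)(T := {}), invoked := insert T (invoked l),
                      bsent := insert (T, x) (bsent l)\<rparr>"

definition bval_count :: "lstate \<Rightarrow> nat \<times> nat \<Rightarrow> bool option \<Rightarrow> nat" where
  "bval_count l T x = card {j. (j, BVAL T x) \<in> rcv l}"

text \<open>Wait condition of SBV-Broadcast: n-t distinct senders in Q, sender j having sent
  AUX(T, vf j) with vf j in the current bin_T; the view is then vf ` Q.\<close>
definition aux_ok :: "nat \<Rightarrow> nat \<Rightarrow> lstate \<Rightarrow> nat \<times> nat \<Rightarrow> nat set \<Rightarrow> (nat \<Rightarrow> bool option) \<Rightarrow> bool" where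
  "aux_ok n t l T Q vf \<longleftrightarrow> Q \<subseteq> {..<n} \<and> card Q = n - t \<and>
      (\<forall>j\<in>Q. (j, AUX T (vf j)) \<in> rcv l \<and> vf j \<in> bin l T)"

definition auxset_ok :: "nat \<Rightarrow> nat \<Rightarrow> lstate \<Rightarrow> nat \<Rightarrow> nat set \<Rightarrow> (nat \<Rightarrow> bool option set) \<Rightarrow> bool" where
  "auxset_ok n t l r Q Sf \<longleftrightarrow> Q \<subseteq> {..<n} \<and> card Q = n - t \<and>
      (\<forall>j\<in>Q. (j, AUXSET r (Sf j)) \<in> rcv l \<and> Sf j \<subseteq> bin l (r, 0))"

definition step8 :: "bool option set \<Rightarrow> bool \<Rightarrow> lstate \<Rightarrow> lstate" where
  "step8 V s l =
     (if \<exists>b. V = {Some b} then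
        (let b = (THE b. V = {Some b}) in
          l\<lparr>est := Some b, dec := (if dec l = None then Some (b, rnd l) else dec l)\<rparr>)
      else if \<exists>b. V = {Some b, None} then l\<lparr>est := Some (THE b. V = {Some b, None})\<rparr>
      else if V = {None} then l\<lparr>est := Some s\<rparr>
      else l)"

text \<open>Steps of the main thread of non-faulty process i. coin r i is the value returned
  by random() to process i in round r.\<close>
definition main_step :: "nat \<Rightarrow> nat \<Rightarrow> (nat \<Rightarrow> nat \<Rightarrow> bool) \<Rightarrow> nat \<Rightarrow> gstate \<Rightarrow> gstate \<Rightarrow> bool" where
  "main_step n t coin i g g' \<longleftrightarrow>
     (let l = loc g i; r = rnd l in
       (pc l = Start \<and>
          g' = send_all n i (BVAL (Suc r, 0) (est l))
                 (set_loc i ((bv_start (Suc r, 0) (est l) l)\<lparr>rnd := Suc r, pc := WBin0\<rparr>) g))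
     \<or> (pc l = WBin0 \<and> (\<exists>w \<in> bin l (r, 0).
          g' = send_all n i (AUX (r, 0) w) (set_loc i (l\<lparr>pc := WAux0\<rparr>) g)))
     \<or> (pc l = WAux0 \<and> (\<exists>Q vf. aux_ok n t l (r, 0) Q vf \<and>
          g' = send_all n i (AUXSET r (vf ` Q)) (set_loc i (l\<lparr>pc := WAuxSet\<rparr>) g)))
     \<or> (pc l = WAuxSet \<and> (\<exists>Q Sf. auxset_ok n t l r Q Sf \<and>
          (let V1 = \<Union>(Sf ` Q);
               e = (if is_singleton V1 then the_elem V1 else None) in
           g' = send_all n i (BVAL (r, 1) e)
                 (set_loc i ((bv_start (r, 1) e l)\<lparr>est := e, pc := WBin1\<rparr>) g))))
     \<or> (pc l = WBin1 \<and> (\<exists>w \<in> bin l (r, 1).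
          g' = send_all n i (AUX (r, 1) w) (set_loc i (l\<lparr>pc := WAux1\<rparr>) g)))
     \<or> (pc l = WAux1 \<and> (\<exists>Q vf. aux_ok n t l (r, 1) Q vf \<and>
          g' = set_loc i ((step8 (vf ` Q) (coin r i) l)\<lparr>pc := Start\<rparr>) g)))"

text \<open>One step of the system. F is the set of Byzantine processes.\<close>
definition step :: "nat \<Rightarrow> nat \<Rightarrow> nat set \<Rightarrow> (nat \<Rightarrow> nat \<Rightarrow> bool) \<Rightarrow> action \<Rightarrow> gstate \<Rightarrow> gstate \<Rightarrow> bool" where
  "step n t F coin a g g' \<longleftrightarrow>
     (case a of
        Main i \<Rightarrow> i < n \<and> i \<notin> F \<and> main_step n t coin i g g'
      | Echo i T x \<Rightarrow> i < n \<and> i \<notin> F \<and> T \<in> invoked (loc g i) \<and>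
          bval_count (loc g i) T x \<ge> t + 1 \<and> (T, x) \<notin> bsent (loc g i) \<and>
          g' = send_all n i (BVAL T x)
                 (set_loc i ((loc g i)\<lparr>bsent := insert (T, x) (bsent (loc g i))\<rparr>) g)
      | AddBin i T x \<Rightarrow> i < n \<and> i \<notin> F \<and> T \<in> invoked (loc g i) \<and>
          bval_count (loc g i) T x \<ge> 2 * t + 1 \<and> x \<notin> bin (loc g i) T \<and>
          g' = set_loc i ((loc g i)\<lparr>bin := (bin (loc g i))(T := insert x (bin (loc g i) T))\<rparr>) g
      | Deliver j i m \<Rightarrow> (j, i, m) \<in> net g \<and> (j, m) \<notin> rcv (loc g i) \<and>
          g' = set_loc i ((loc g i)\<lparr>rcv := insert (j, m) (rcv (loc g i))\<rparr>) g
      | Byz j i m \<Rightarrow> j \<in> F \<and> j < n \<and> i < n \<and> g' = g\<lparr>net := insert (j, i, m) (net g)\<rparr>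
      | Stutter \<Rightarrow> g' = g)"

definition enabled :: "nat \<Rightarrow> nat \<Rightarrow> nat set \<Rightarrow> (nat \<Rightarrow> nat \<Rightarrow> bool) \<Rightarrow> action \<Rightarrow> gstate \<Rightarrow> bool" where
  "enabled n t F coin a g \<longleftrightarrow> (\<exists>g'. step n t F coin a g g')"

fun local_action :: "action \<Rightarrow> bool" where
  "local_action (Main i) = True"
| "local_action (Echo i T x) = True"
| "local_action (AddBin i T x) = True"
| "local_action _ = False"

definition execution :: "nat \<Rightarrow> nat \<Rightarrow> nat set \<Rightarrow> (nat \<Rightarrow> nat \<Rightarrow> bool) \<Rightarrow> (nat \<Rightarrow> bool) \<Rightarrow>
    (nat \<Rightarrow> gstate) \<Rightarrow> (nat \<Rightarrow> action) \<Rightarrow> bool" where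
  "execution n t F coin inp s lab \<longleftrightarrow>
     s 0 = init_state inp \<and> (\<forall>k. step n t F coin (lab k) (s k) (s (Suc k)))"

text \<open>Fairness: reliable channels between non-faulty processes, and non-faulty processes
  keep taking steps (weak fairness of their local actions).\<close>
definition fair :: "nat \<Rightarrow> nat \<Rightarrow> nat set \<Rightarrow> (nat \<Rightarrow> nat \<Rightarrow> bool) \<Rightarrow>
    (nat \<Rightarrow> gstate) \<Rightarrow> (nat \<Rightarrow> action) \<Rightarrow> bool" where
  "fair n t F coin s lab \<longleftrightarrow>
     (\<forall>k i j m. i < n \<and> j < n \<and> i \<notin> F \<and> j \<notin> F \<and> (j, i, m) \<in> net (s k) \<longrightarrow>
         (\<exists>k'. (j, m) \<in> rcv (loc (s k') i))) \<and>
     (\<forall>a k. local_action a \<and> (\<forall>k'\<ge>k. enabled n t F coin a (s k')) \<longrightarrow>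
         (\<exists>k'\<ge>k. lab k' = a))"

text \<open>Weak common coin with parameter d (per-execution content): with d = 2 all
  non-faulty processes always get the same bit in each round; for d > 2 the values
  may differ.\<close>
definition weak_coin :: "nat \<Rightarrow> nat \<Rightarrow> nat set \<Rightarrow> (nat \<Rightarrow> nat \<Rightarrow> bool) \<Rightarrow> bool" where
  "weak_coin d n F coin \<longleftrightarrow> 2 \<le> d \<and>
     (d = 2 \<longrightarrow> (\<forall>r i j. i < n \<and> j < n \<and> i \<notin> F \<and> j \<notin> F \<longrightarrow> coin r i = coin r j))"

end

theory Submission
  imports Defs
begin

text \<open>If every correct process starts round r with estimate v, then in rounds from r on a
  value other than v is BVAL-broadcast only by faulty processes, so it never reaches the echo
  threshold t + 1 nor the bin threshold 2t + 1. Hence the bins, views and AUXSET messages of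
  correct processes from round r on all equal {v}, which is an invariant of the execution; it
  forces every decision from round r on to be v, and a process that completes round r to have
  decided. Completion of round r follows from fairness: at each of the six waiting points all
  n - t > 2t correct processes have sent the awaited v-message, the channels deliver them, and
  the enabled step eventually fires.\<close>

lemma loc_set_loc [simp]: "loc (set_loc i l g) = (loc g)(i := l)"
  by (simp add: set_loc_def)

lemma net_set_loc [simp]: "net (set_loc i l g) = net g"
  by (simp add: set_loc_def)

lemma loc_send_all [simp]: "loc (send_all n i m g) = loc g"
  by (simp add: send_all_def)

lemma net_send_all [simp]: "net (send_all n i m g) = net g \<union> {(i, j, m) | j. j < n}"
  by (simp add: send_all_def)

lemma bv_start_simps [simp]:
  "rnd (bv_start T x l) = rnd l" "pc (bv_start T x l) = pc l" "est (bv_start T x l) = est l"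
  "dec (bv_start T x l) = dec l" "rcv (bv_start T x l) = rcv l"
  "bin (bv_start T x l) = (bin l)(T := {})" "invoked (bv_start T x l) = insert T (invoked l)"
  "bsent (bv_start T x l) = insert (T, x) (bsent l)"
  by (simp_all add: bv_start_def)

lemma step8_simps [simp]:
  "rnd (step8 V c l) = rnd l" "pc (step8 V c l) = pc l" "rcv (step8 V c l) = rcv l"
  "bin (step8 V c l) = bin l" "invoked (step8 V c l) = invoked l" "bsent (step8 V c l) = bsent l"
  by (simp_all add: step8_def Let_def)

lemma step8_singleton:
  "est (step8 {Some b} c l) = Some b"
  "dec (step8 {Some b} c l) = (if dec l = None then Some (b, rnd l) else dec l)"
  by (simp_all add: step8_def Let_def)

lemma dec_step8:
  "dec (step8 V c l) = dec l \<or>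
     (dec l = None \<and> (\<exists>b. V = {Some b} \<and> dec (step8 V c l) = Some (b, rnd l)))"
proof (cases "\<exists>b. V = {Some b}")
  case True
  then obtain b where "V = {Some b}" by blast
  then show ?thesis by (simp add: step8_singleton)
qed (unfold step8_def Let_def, simp)

definition view1_est :: "nat set \<Rightarrow> (nat \<Rightarrow> bool option set) \<Rightarrow> bool option" where
  "view1_est Q Sf = (if is_singleton (\<Union>(Sf ` Q)) then the_elem (\<Union>(Sf ` Q)) else None)"

lemma main_step_cases:
  assumes "main_step n t coin i g g'"
  obtains (start) "pc (loc g i) = Start"
    "g' = send_all n i (BVAL (Suc (rnd (loc g i)), 0) (est (loc g i)))
          (set_loc i ((bv_start (Suc (rnd (loc g i)), 0) (est (loc g i)) (loc g i))
             \<lparr>rnd := Suc (rnd (loc g i)), pc := WBin0\<rparr>) g)"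
  | (bin0) w where "pc (loc g i) = WBin0" "w \<in> bin (loc g i) (rnd (loc g i), 0)"
    "g' = send_all n i (AUX (rnd (loc g i), 0) w) (set_loc i ((loc g i)\<lparr>pc := WAux0\<rparr>) g)"
  | (aux0) Q vf where "pc (loc g i) = WAux0" "aux_ok n t (loc g i) (rnd (loc g i), 0) Q vf"
    "g' = send_all n i (AUXSET (rnd (loc g i)) (vf ` Q)) (set_loc i ((loc g i)\<lparr>pc := WAuxSet\<rparr>) g)"
  | (auxset) Q Sf where "pc (loc g i) = WAuxSet" "auxset_ok n t (loc g i) (rnd (loc g i)) Q Sf"
    "g' = send_all n i (BVAL (rnd (loc g i), 1) (view1_est Q Sf))
          (set_loc i ((bv_start (rnd (loc g i), 1) (view1_est Q Sf) (loc g i))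
             \<lparr>est := view1_est Q Sf, pc := WBin1\<rparr>) g)"
  | (bin1) w where "pc (loc g i) = WBin1" "w \<in> bin (loc g i) (rnd (loc g i), 1)"
    "g' = send_all n i (AUX (rnd (loc g i), 1) w) (set_loc i ((loc g i)\<lparr>pc := WAux1\<rparr>) g)"
  | (aux1) Q vf where "pc (loc g i) = WAux1" "aux_ok n t (loc g i) (rnd (loc g i), 1) Q vf"
    "g' = set_loc i ((step8 (vf ` Q) (coin (rnd (loc g i)) i) (loc g i))\<lparr>pc := Start\<rparr>) g"
  using assms unfolding main_step_def Let_def view1_est_def
  by (elim disjE conjE exE bexE) (rule that; assumption)+

lemma main_step_exists:
  "pc (loc g i) = Start \<Longrightarrow> \<exists>g'. main_step n t coin i g g'"
  "pc (loc g i) = WBin0 \<Longrightarrow> w \<in> bin (loc g i) (rnd (loc g i), 0) \<Longrightarrow> \<exists>g'. main_step n t coin i g g'"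
  "pc (loc g i) = WAux0 \<Longrightarrow> aux_ok n t (loc g i) (rnd (loc g i), 0) Q vf \<Longrightarrow>
     \<exists>g'. main_step n t coin i g g'"
  "pc (loc g i) = WAuxSet \<Longrightarrow> auxset_ok n t (loc g i) (rnd (loc g i)) Q Sf \<Longrightarrow>
     \<exists>g'. main_step n t coin i g g'"
  "pc (loc g i) = WBin1 \<Longrightarrow> w \<in> bin (loc g i) (rnd (loc g i), 1) \<Longrightarrow> \<exists>g'. main_step n t coin i g g'"
  "pc (loc g i) = WAux1 \<Longrightarrow> aux_ok n t (loc g i) (rnd (loc g i), 1) Q vf \<Longrightarrow>
     \<exists>g'. main_step n t coin i g g'"
  by (auto simp: main_step_def Let_def)

lemma Main_enabledI:
  "i < n \<Longrightarrow> i \<notin> F \<Longrightarrow> \<exists>g'. main_step n t coin i g g' \<Longrightarrow> enabled n t F coin (Main i) g"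
  by (simp add: enabled_def step_def)

lemma main_step_other: "main_step n t coin j g g' \<Longrightarrow> j \<noteq> i \<Longrightarrow> loc g' i = loc g i"
  by (erule main_step_cases) auto

lemma main_step_net_other:
  "main_step n t coin j g g' \<Longrightarrow> (i, x, m) \<in> net g' \<Longrightarrow> i \<noteq> j \<Longrightarrow> (i, x, m) \<in> net g"
  by (erule main_step_cases) auto

text \<open>A main step increases the rank by one; the location Start belongs to the end of
  round rnd, before the counter is incremented.\<close>
fun pc_rank :: "pcv \<Rightarrow> nat" where
  "pc_rank WBin0 = 1" | "pc_rank WAux0 = 2" | "pc_rank WAuxSet = 3"
| "pc_rank WBin1 = 4" | "pc_rank WAux1 = 5" | "pc_rank Start = 6"

definition rank :: "lstate \<Rightarrow> nat" where
  "rank l = 6 * rnd l + pc_rank (pc l)"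

lemma rank_eq_iff: "rank l = 6 * q + pc_rank p \<longleftrightarrow> rnd l = q \<and> pc l = p"
  by (cases p; cases "pc l"; simp add: rank_def; presburger)

definition bv_rank :: "nat \<times> nat \<Rightarrow> nat" where
  "bv_rank T = 6 * fst T + 3 * snd T + 1"

lemma main_step_self:
  assumes "main_step n t coin i g g'"
  shows "rcv (loc g' i) = rcv (loc g i)" "invoked (loc g i) \<subseteq> invoked (loc g' i)"
    "rank (loc g' i) = Suc (rank (loc g i))" "net g \<subseteq> net g'"
  using assms by (cases rule: main_step_cases; auto simp: rank_def)+

lemma step_Main: "step n t F coin (Main i) g g' \<longleftrightarrow> i < n \<and> i \<notin> F \<and> main_step n t coin i g g'"
  by (simp add: step_def)

lemma step_frame:
  assumes "step n t F coin a g g'" "a \<noteq> Main i"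
  shows "rnd (loc g' i) = rnd (loc g i)" "pc (loc g' i) = pc (loc g i)"
    "est (loc g' i) = est (loc g i)" "dec (loc g' i) = dec (loc g i)"
    "rcv (loc g i) \<subseteq> rcv (loc g' i)" "invoked (loc g i) \<subseteq> invoked (loc g' i)"
    "bin (loc g i) T \<subseteq> bin (loc g' i) T"
  using assms by (cases a; auto simp: step_def main_step_other)+

lemma step_net_mono: "step n t F coin a g g' \<Longrightarrow> net g \<subseteq> net g'"
  by (cases a) (auto simp: step_def dest: main_step_self(4))

lemma step_rcv_mono: "step n t F coin a g g' \<Longrightarrow> rcv (loc g i) \<subseteq> rcv (loc g' i)"
  by (cases "a = Main i") (auto simp: step_Main main_step_self(1) dest: step_frame(5))

lemma step_invoked_mono: "step n t F coin a g g' \<Longrightarrow> invoked (loc g i) \<subseteq> invoked (loc g' i)"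
  by (cases "a = Main i") (auto simp: step_Main dest: main_step_self(2) step_frame(6))

lemma rank_step:
  "rank (loc g' i) = (if a = Main i then Suc (rank (loc g i)) else rank (loc g i))"
  if "step n t F coin a g g'"
proof (cases "a = Main i")
  case True
  then show ?thesis using that by (auto simp: step_Main dest: main_step_self(3))
qed (use that in \<open>simp add: rank_def step_frame\<close>)

text \<open>A bin is reset only when its BV-Broadcast is invoked, which happens below its rank.\<close>
lemma step_bin_mono:
  assumes st: "step n t F coin a g g'" and "bv_rank T \<le> rank (loc g i)"
  shows "bin (loc g i) T \<subseteq> bin (loc g' i) T"
proof (cases "a = Main i")
  case True
  then have "main_step n t coin i g g'" using st by (simp add: step_Main)
  then show ?thesis
  proof (cases rule: main_step_cases)
    case start
    then have "T \<noteq> (Suc (rnd (loc g i)), 0)" using assms(2) by (auto simp: bv_rank_def rank_def)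
    then show ?thesis using start(2) by simp
  next
    case (auxset Q Sf)
    then have "T \<noteq> (rnd (loc g i), 1)" using assms(2) by (auto simp: bv_rank_def rank_def)
    then show ?thesis using auxset(3) by simp
  qed auto
qed (use step_frame[OF st] in blast)

lemma step_new_message:
  "step n t F coin a g g' \<Longrightarrow> (i, x, m) \<in> net g' \<Longrightarrow> (i, x, m) \<notin> net g \<Longrightarrow>
     a = Main i \<or> (\<exists>T y. a = Echo i T y \<and> m = BVAL T y) \<or> i \<in> F"
  by (cases a) (auto simp: step_def dest: main_step_net_other)

definition wf_net :: "nat \<Rightarrow> nat set \<Rightarrow> gstate \<Rightarrow> bool" where
  "wf_net n F g \<longleftrightarrow> (\<forall>i j m. (j, m) \<in> rcv (loc g i) \<longrightarrow> (j, i, m) \<in> net g)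
    \<and> (\<forall>j i m. (j, i, m) \<in> net g \<longrightarrow> j < n)
    \<and> (\<forall>j i T x. j \<notin> F \<longrightarrow> (j, i, BVAL T x) \<in> net g \<longrightarrow> (T, x) \<in> bsent (loc g j))"

lemma wf_net_init: "wf_net n F (init_state inp)"
  by (simp add: wf_net_def init_state_def init_loc_def)

lemma wf_net_step:
  assumes "step n t F coin a g g'" "wf_net n F g"
  shows "wf_net n F g'"
proof (cases a)
  case (Main i)
  with assms have "main_step n t coin i g g'" "i < n" by (auto simp: step_def)
  then show ?thesis using assms(2) by (cases rule: main_step_cases) (auto simp: wf_net_def)
qed (use assms in \<open>auto simp: step_def wf_net_def\<close>)

section \<open>Executions starting round r unanimously\<close>

locale unanimous_round =
  fixes n t :: nat and F :: "nat set" and coin :: "nat \<Rightarrow> nat \<Rightarrow> bool"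
    and inp :: "nat \<Rightarrow> bool" and s :: "nat \<Rightarrow> gstate" and lab :: "nat \<Rightarrow> action"
    and r :: nat and v :: bool
  assumes n_gt: "n > 3 * t"
    and faulty_sub: "F \<subseteq> {..<n}" and card_faulty: "card F \<le> t"
    and exec: "execution n t F coin inp s lab"
    and fair: "fair n t F coin s lab"
    and r_pos: "r \<ge> 1"
    and start: "\<forall>i. i < n \<and> i \<notin> F \<longrightarrow>
           (\<exists>k. pc (loc (s k) i) = Start \<and> rnd (loc (s k) i) + 1 = r \<and> est (loc (s k) i) = Some v)"
begin

abbreviation correct :: "nat \<Rightarrow> bool" where
  "correct i \<equiv> i < n \<and> i \<notin> F"

abbreviation lst :: "nat \<Rightarrow> nat \<Rightarrow> lstate" where
  "lst k i \<equiv> loc (s k) i"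

lemma step_at: "step n t F coin (lab k) (s k) (s (Suc k))"
  using exec by (simp add: execution_def)

lemma Main_at: "lab k = Main j \<Longrightarrow> main_step n t coin j (s k) (s (Suc k))"
  using step_at[of k] by (simp add: step_Main)

lemma s_0: "s 0 = init_state inp"
  using exec by (simp add: execution_def)

lemma wf_net_at: "wf_net n F (s k)"
  by (induction k) (auto simp: s_0 wf_net_init intro: wf_net_step[OF step_at])

lemma finite_faulty: "finite F"
  using faulty_sub finite_subset by blast

lemma card_correct: "n - t \<le> card {j. correct j}"
proof -
  have "{j. correct j} = {..<n} - F" by auto
  then have "card {j. correct j} = n - card F"
    using card_Diff_subset[OF finite_faulty faulty_sub] by simp
  then show ?thesis using card_faulty by simp
qed

lemma correct_quorum: "\<exists>Q. Q \<subseteq> {j. correct j} \<and> card Q = n - t"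
  using obtain_subset_with_card_n[OF card_correct] by metis

lemma quorum_meets_correct:
  assumes "Q \<subseteq> {..<n}" "card Q = n - t"
  shows "\<exists>j\<in>Q. j \<notin> F"
proof (rule ccontr)
  assume "\<not> ?thesis"
  then have "card Q \<le> card F" using card_mono[OF finite_faulty] by blast
  then show False using assms card_faulty n_gt by linarith
qed

lemma net_mono: "k \<le> k' \<Longrightarrow> net (s k) \<subseteq> net (s k')"
  by (induction k' rule: dec_induct) (use step_net_mono[OF step_at] in blast)+

lemma rcv_mono: "k \<le> k' \<Longrightarrow> rcv (lst k i) \<subseteq> rcv (lst k' i)"
  by (induction k' rule: dec_induct) (use step_rcv_mono[OF step_at] in blast)+

lemma invoked_mono: "k \<le> k' \<Longrightarrow> invoked (lst k i) \<subseteq> invoked (lst k' i)"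
  by (induction k' rule: dec_induct) (use step_invoked_mono[OF step_at] in blast)+

lemma rank_Suc: "rank (lst (Suc k) i) = (if lab k = Main i then Suc (rank (lst k i)) else rank (lst k i))"
  by (rule rank_step[OF step_at])

lemma rank_mono: "k \<le> k' \<Longrightarrow> rank (lst k i) \<le> rank (lst k' i)"
  by (induction k' rule: dec_induct) (auto simp: rank_Suc intro: le_SucI)

lemma rank_0: "rank (lst 0 i) = 6"
  by (simp add: s_0 init_state_def init_loc_def rank_def)

lemma bin_mono:
  "k \<le> k' \<Longrightarrow> bv_rank T \<le> rank (lst k i) \<Longrightarrow> x \<in> bin (lst k i) T \<Longrightarrow> x \<in> bin (lst k' i) T"
proof (induction k' rule: dec_induct)
  case (step m)
  then have "bv_rank T \<le> rank (lst m i)" using rank_mono[of k m i] by simp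
  then show ?case using step_bin_mono[OF step_at] step by blast
qed simp

lemma est_constant: "k \<le> k' \<Longrightarrow> rank (lst k i) = rank (lst k' i) \<Longrightarrow> est (lst k i) = est (lst k' i)"
proof (induction k' rule: dec_induct)
  case (step m)
  have "rank (lst k i) \<le> rank (lst m i)" "rank (lst m i) \<le> rank (lst (Suc m) i)"
    using step.hyps(1) rank_mono by auto
  with step.prems have "rank (lst m i) = rank (lst (Suc m) i)" by simp
  then have "lab m \<noteq> Main i" by (simp add: rank_Suc split: if_splits)
  then show ?case using step step_frame(3)[OF step_at] \<open>rank (lst m i) = _\<close> by simp
qed simp

lemma rank_round_start: "rank l = 6 * r \<longleftrightarrow> pc l = Start \<and> rnd l + 1 = r"
  using rank_eq_iff[of l "r - 1" Start] r_pos by auto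

lemma est_at_round_start:
  assumes "correct i" "pc (lst k i) = Start" "rnd (lst k i) + 1 = r"
  shows "est (lst k i) = Some v"
proof -
  obtain k0 where k0: "pc (lst k0 i) = Start" "rnd (lst k0 i) + 1 = r" "est (lst k0 i) = Some v"
    using start assms(1) by blast
  have "rank (lst k i) = rank (lst k0 i)" using assms(2,3) k0(1,2) rank_round_start by metis
  then show ?thesis using est_constant k0(3) by (metis nat_le_linear)
qed


subsection \<open>Safety\<close>

definition locked :: "gstate \<Rightarrow> nat \<Rightarrow> bool" where
  "locked g i \<longleftrightarrow>
    (\<forall>q b x. r \<le> q \<longrightarrow> x \<noteq> Some v \<longrightarrow> ((q, b), x) \<notin> bsent (loc g i))
  \<and> (\<forall>q b x. r \<le> q \<longrightarrow> x \<noteq> Some v \<longrightarrow> x \<notin> bin (loc g i) (q, b))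
  \<and> (\<forall>j q b w. r \<le> q \<longrightarrow> (i, j, AUX (q, b) w) \<in> net g \<longrightarrow> w = Some v)
  \<and> (\<forall>j q S. r \<le> q \<longrightarrow> (i, j, AUXSET q S) \<in> net g \<longrightarrow> S = {Some v})
  \<and> (pc (loc g i) = Start \<and> r \<le> rnd (loc g i) \<longrightarrow> est (loc g i) = Some v \<and> dec (loc g i) \<noteq> None)
  \<and> (\<forall>w q. dec (loc g i) = Some (w, q) \<longrightarrow> q \<le> rnd (loc g i) \<and> (r \<le> q \<longrightarrow> w = v))"

lemma lockedD:
  assumes "locked g i"
  shows "\<And>q b x. r \<le> q \<Longrightarrow> x \<noteq> Some v \<Longrightarrow> ((q, b), x) \<notin> bsent (loc g i)"
    "\<And>q b x. r \<le> q \<Longrightarrow> x \<in> bin (loc g i) (q, b) \<Longrightarrow> x = Some v"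
    "\<And>j q b w. r \<le> q \<Longrightarrow> (i, j, AUX (q, b) w) \<in> net g \<Longrightarrow> w = Some v"
    "\<And>j q S. r \<le> q \<Longrightarrow> (i, j, AUXSET q S) \<in> net g \<Longrightarrow> S = {Some v}"
    "pc (loc g i) = Start \<Longrightarrow> r \<le> rnd (loc g i) \<Longrightarrow> est (loc g i) = Some v \<and> dec (loc g i) \<noteq> None"
    "\<And>w q. dec (loc g i) = Some (w, q) \<Longrightarrow> q \<le> rnd (loc g i) \<and> (r \<le> q \<longrightarrow> w = v)"
  using assms unfolding locked_def by blast+

lemma locked_init: "locked (init_state inp) i"
  using r_pos by (simp add: locked_def init_state_def init_loc_def)

text \<open>Only faulty processes ever send a value other than v in rounds from r on, so such a
  value never reaches the echo threshold t + 1.\<close>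
lemma bval_count_other_value:
  assumes "wf_net n F g" "\<forall>j. correct j \<longrightarrow> locked g j" "r \<le> q" "x \<noteq> Some v"
  shows "bval_count (loc g i) (q, b) x \<le> t"
proof -
  have "{j. (j, BVAL (q, b) x) \<in> rcv (loc g i)} \<subseteq> F"
  proof
    fix j assume "j \<in> {j. (j, BVAL (q, b) x) \<in> rcv (loc g i)}"
    then have sent: "(j, i, BVAL (q, b) x) \<in> net g" and "j < n"
      using assms(1) unfolding wf_net_def by blast+
    show "j \<in> F"
    proof (rule ccontr)
      assume "j \<notin> F"
      then have "((q, b), x) \<in> bsent (loc g j)" using sent assms(1) by (auto simp: wf_net_def)
      then show False using lockedD(1) assms(2-4) \<open>j < n\<close> \<open>j \<notin> F\<close> by blast
    qed
  qed
  then show ?thesis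
    unfolding bval_count_def using card_mono[OF finite_faulty] card_faulty le_trans by blast
qed

lemma locked_step_other:
  assumes st: "step n t F coin a g g'" and wf: "wf_net n F g"
    and all: "\<forall>j. correct j \<longrightarrow> locked g j" and i: "correct i" and "a \<noteq> Main i"
  shows "locked g' i"
proof -
  have li: "locked g i" using all i by blast
  note frame = step_frame[OF st \<open>a \<noteq> Main i\<close>]
  have bsent': "p \<in> bsent (loc g i) \<or> (\<exists>T x. p = (T, x) \<and> t + 1 \<le> bval_count (loc g i) T x)"
    if "p \<in> bsent (loc g' i)" for p
    using st that \<open>a \<noteq> Main i\<close> by (cases a) (auto simp: step_def dest: main_step_other split: if_splits)
  have bin': "x \<in> bin (loc g i) T \<or> 2 * t + 1 \<le> bval_count (loc g i) T x"
    if "x \<in> bin (loc g' i) T" for x T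
    using st that \<open>a \<noteq> Main i\<close> by (cases a) (auto simp: step_def dest: main_step_other split: if_splits)
  have net': "(i, j, m) \<in> net g \<or> (\<exists>T y. m = BVAL T y)" if "(i, j, m) \<in> net g'" for j m
    using step_new_message[OF st that] \<open>a \<noteq> Main i\<close> i by blast
  show ?thesis unfolding locked_def
  proof (intro conjI allI impI)
    fix q b x assume q: "r \<le> q" "x \<noteq> Some v"
    show "((q, b), x) \<notin> bsent (loc g' i)"
    proof
      assume "((q, b), x) \<in> bsent (loc g' i)"
      from bsent'[OF this] show False
        using lockedD(1)[OF li q] bval_count_other_value[OF wf all q, of i b] by auto
    qed
  next
    fix q b x assume q: "r \<le> q" "x \<noteq> Some v"
    show "x \<notin> bin (loc g' i) (q, b)"
    proof
      assume "x \<in> bin (loc g' i) (q, b)"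
      from bin'[OF this] show False
        using lockedD(2)[OF li] q bval_count_other_value[OF wf all q, of i b] by auto
    qed
  next
    fix j q b w assume "r \<le> q" "(i, j, AUX (q, b) w) \<in> net g'"
    then show "w = Some v" using net' lockedD(3)[OF li] by blast
  next
    fix j q S assume "r \<le> q" "(i, j, AUXSET q S) \<in> net g'"
    then show "S = {Some v}" using net' lockedD(4)[OF li] by blast
  qed (use lockedD(5,6)[OF li] frame(1-4) in auto)
qed

lemma aux_view_locked:
  assumes "locked g i" "r \<le> rnd (loc g i)" "aux_ok n t (loc g i) (rnd (loc g i), b) Q vf"
  shows "vf ` Q = {Some v}"
proof -
  have "Q \<noteq> {}" using assms(3) n_gt by (auto simp: aux_ok_def)
  moreover have "\<forall>j\<in>Q. vf j = Some v"
    using assms lockedD(2) unfolding aux_ok_def by blast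
  ultimately show ?thesis by auto
qed

text \<open>Some correct member of the quorum sent AUXSET(r, {v}); as the union of the sets
  is contained in the bin, which holds only v, it is exactly {v}.\<close>
lemma auxset_view_locked:
  assumes wf: "wf_net n F g" and all: "\<forall>j. correct j \<longrightarrow> locked g j" and i: "correct i"
    and rnd: "r \<le> rnd (loc g i)" and ok: "auxset_ok n t (loc g i) (rnd (loc g i)) Q Sf"
  shows "view1_est Q Sf = Some v"
proof -
  have Q: "Q \<subseteq> {..<n}" "card Q = n - t"
    and rcvd: "\<forall>j\<in>Q. (j, AUXSET (rnd (loc g i)) (Sf j)) \<in> rcv (loc g i)"
    and in_bin: "\<forall>j\<in>Q. Sf j \<subseteq> bin (loc g i) (rnd (loc g i), 0)"
    using ok by (auto simp: auxset_ok_def)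
  have "\<Union>(Sf ` Q) \<subseteq> {Some v}" using in_bin lockedD(2) all i rnd by blast
  moreover obtain j where j: "j \<in> Q" "j \<notin> F" using quorum_meets_correct[OF Q] by blast
  moreover have "Sf j = {Some v}"
  proof -
    have "(j, i, AUXSET (rnd (loc g i)) (Sf j)) \<in> net g" using rcvd j wf by (auto simp: wf_net_def)
    then show ?thesis using lockedD(4) all j Q(1) rnd by blast
  qed
  ultimately have "\<Union>(Sf ` Q) = {Some v}" by blast
  then show ?thesis by (simp add: view1_est_def)
qed

lemma locked_step_Main:
  assumes m: "main_step n t coin i g g'" and wf: "wf_net n F g"
    and all: "\<forall>j. correct j \<longrightarrow> locked g j" and i: "correct i"
    and est_start: "pc (loc g i) = Start \<Longrightarrow> rnd (loc g i) + 1 = r \<Longrightarrow> est (loc g i) = Some v"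
  shows "locked g' i"
proof -
  have li: "locked g i" using all i by blast
  note D = lockedD[OF li]
  let ?l = "loc g i"
  from m show ?thesis
  proof (cases rule: main_step_cases)
    case start
    have "est ?l = Some v" if "r \<le> Suc (rnd ?l)"
      using that D(5) start(1) est_start by (cases "r \<le> rnd ?l") auto
    then show ?thesis using start D unfolding locked_def by (auto dest: le_SucI)
  next
    case (bin0 w)
    then show ?thesis using D unfolding locked_def by auto
  next
    case (aux0 Q vf)
    then show ?thesis using D aux_view_locked[OF li] unfolding locked_def by auto
  next
    case (auxset Q Sf)
    then show ?thesis using D auxset_view_locked[OF wf all i] unfolding locked_def by auto
  next
    case (bin1 w)
    then show ?thesis using D unfolding locked_def by auto
  next
    case (aux1 Q vf)
    let ?l' = "step8 (vf ` Q) (coin (rnd ?l) i) ?l"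
    have view: "vf ` Q = {Some v}" if "r \<le> rnd ?l" using aux_view_locked[OF li that aux1(2)] .
    have "q \<le> rnd ?l \<and> (r \<le> q \<longrightarrow> w = v)" if d: "dec ?l' = Some (w, q)" for w q
      using dec_step8[of "vf ` Q" "coin (rnd ?l) i" ?l]
    proof
      assume "dec ?l' = dec ?l"
      then show ?thesis using d D(6) by (metis (no_types))
    next
      assume "dec ?l = None \<and> (\<exists>b. vf ` Q = {Some b} \<and> dec ?l' = Some (b, rnd ?l))"
      then show ?thesis using d view by auto
    qed
    moreover have "r \<le> rnd ?l \<Longrightarrow> est ?l' = Some v \<and> dec ?l' \<noteq> None"
      using view step8_singleton by auto
    ultimately show ?thesis using aux1(1,3) D unfolding locked_def by auto
  qed
qed

lemma locked_always: "correct i \<Longrightarrow> locked (s k) i"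
proof (induction k arbitrary: i)
  case 0
  then show ?case by (simp add: s_0 locked_init)
next
  case (Suc k)
  have all: "\<forall>j. correct j \<longrightarrow> locked (s k) j" using Suc.IH by blast
  show ?case
  proof (cases "lab k = Main i")
    case True
    then show ?thesis
      using locked_step_Main[OF Main_at] wf_net_at all Suc.prems est_at_round_start by blast
  next
    case False
    then show ?thesis using locked_step_other[OF step_at wf_net_at all Suc.prems] by blast
  qed
qed

subsection \<open>Termination of round r\<close>

definition reaches :: "nat \<Rightarrow> bool" where
  "reaches m \<longleftrightarrow> (\<forall>i. correct i \<longrightarrow> (\<exists>k. m \<le> rank (lst k i)))"

lemma reachesD: "reaches m \<Longrightarrow> correct i \<Longrightarrow> \<exists>k. m \<le> rank (lst k i)"
  unfolding reaches_def by blast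

lemma fair_local_action:
  assumes "local_action a" "\<forall>\<^sub>F k in sequentially. enabled n t F coin a (s k)"
  shows "\<exists>\<^sub>F k in sequentially. lab k = a"
proof -
  obtain K where K: "\<forall>k\<ge>K. enabled n t F coin a (s k)"
    using assms(2) unfolding eventually_sequentially by blast
  have "\<exists>k\<ge>N. lab k = a" for N
    using fair K assms(1) unfolding fair_def by (metis (no_types, lifting) max.boundedE max.cobounded1 order.trans)
  then show ?thesis unfolding frequently_sequentially by blast
qed

lemma reaches_Suc:
  assumes "reaches m"
    and enabled: "\<And>i. correct i \<Longrightarrow>
      \<forall>\<^sub>F k in sequentially. rank (lst k i) = m \<longrightarrow> enabled n t F coin (Main i) (s k)"
    and "m' = Suc m"
  shows "reaches m'"
  unfolding reaches_def
proof (intro allI impI)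
  fix i assume i: "correct i"
  obtain k1 where k1: "m \<le> rank (lst k1 i)" using reachesD[OF assms(1) i] by blast
  show "\<exists>k. m' \<le> rank (lst k i)"
  proof (rule ccontr)
    assume below: "\<not> ?thesis"
    then have le_m: "rank (lst k i) \<le> m" for k using assms(3) by (metis not_less_eq_eq)
    have stuck: "\<forall>\<^sub>F k in sequentially. rank (lst k i) = m"
      using eventually_ge_at_top[of k1] by eventually_elim (metis le_m k1 rank_mono le_antisym)
    then have "\<forall>\<^sub>F k in sequentially. enabled n t F coin (Main i) (s k)"
      using enabled[OF i] by eventually_elim simp
    then have "\<exists>\<^sub>F k in sequentially. lab k = Main i \<and> rank (lst k i) = m"
      by (intro frequently_eventually_frequently[OF fair_local_action stuck]) simp
    then obtain k where "lab k = Main i" "rank (lst k i) = m" by (rule frequentlyE) blast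
    then have "rank (lst (Suc k) i) = m'" using assms(3) by (simp add: rank_Suc)
    with below show False by (metis le_refl)
  qed
qed

lemma holds_after_rank:
  assumes "m < rank (lst k j)" "6 \<le> m"
    and at_m: "\<And>k. rank (lst k j) = m \<Longrightarrow> lab k = Main j \<Longrightarrow> P (s (Suc k))"
    and stable: "\<And>k. P (s k) \<Longrightarrow> P (s (Suc k))"
  shows "P (s k)"
  using assms(1)
proof (induction k)
  case 0
  then show ?case using rank_0 assms(2) by simp
next
  case (Suc k)
  show ?case
  proof (cases "m < rank (lst k j)")
    case True
    then show ?thesis using Suc.IH stable by blast
  next
    case False
    then have "lab k = Main j" "rank (lst k j) = m"
      using Suc.prems rank_Suc[of k j] by (auto split: if_splits)
    then show ?thesis using at_m by blast
  qed
qed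

lemma net_Suc: "net (s k) \<subseteq> net (s (Suc k))"
  by (rule net_mono) simp

lemma invoked_Suc: "invoked (lst k i) \<subseteq> invoked (lst (Suc k) i)"
  by (rule invoked_mono) simp

lemma BVAL0_sent:
  assumes j: "correct j" and "6 * r < rank (lst k j)"
  shows "(\<forall>i<n. (j, i, BVAL (r, 0) (Some v)) \<in> net (s k)) \<and> (r, 0) \<in> invoked (lst k j)"
proof (rule holds_after_rank[OF assms(2)])
  fix k assume "rank (lst k j) = 6 * r" and "lab k = Main j"
  then have pc: "pc (lst k j) = Start" and rnd: "Suc (rnd (lst k j)) = r"
    and "est (lst k j) = Some v" using rank_round_start est_at_round_start j by auto
  from Main_at[OF \<open>lab k = Main j\<close>] show
    "(\<forall>i<n. (j, i, BVAL (r, 0) (Some v)) \<in> net (s (Suc k))) \<and> (r, 0) \<in> invoked (lst (Suc k) j)"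
    by (cases rule: main_step_cases) (use rnd \<open>est (lst k j) = Some v\<close> pc in auto)
qed (use r_pos in simp, use net_Suc invoked_Suc in blast)

lemma AUX0_sent:
  assumes j: "correct j" and "6 * r + 1 < rank (lst k j)"
  shows "\<forall>i<n. (j, i, AUX (r, 0) (Some v)) \<in> net (s k)"
proof (rule holds_after_rank[OF assms(2)])
  fix k assume "rank (lst k j) = 6 * r + 1" and "lab k = Main j"
  then have rnd: "rnd (lst k j) = r" and pc: "pc (lst k j) = WBin0"
    using rank_eq_iff[of _ r WBin0] by auto
  from Main_at[OF \<open>lab k = Main j\<close>] show "\<forall>i<n. (j, i, AUX (r, 0) (Some v)) \<in> net (s (Suc k))"
    by (cases rule: main_step_cases) (use rnd pc lockedD(2)[OF locked_always[OF j]] in auto)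
qed (use r_pos in simp, use net_Suc in blast)

lemma AUXSET_sent:
  assumes j: "correct j" and "6 * r + 2 < rank (lst k j)"
  shows "\<forall>i<n. (j, i, AUXSET r {Some v}) \<in> net (s k)"
proof (rule holds_after_rank[OF assms(2)])
  fix k assume "rank (lst k j) = 6 * r + 2" and "lab k = Main j"
  then have rnd: "rnd (lst k j) = r" and pc: "pc (lst k j) = WAux0"
    using rank_eq_iff[of _ r WAux0] by auto
  from Main_at[OF \<open>lab k = Main j\<close>] show "\<forall>i<n. (j, i, AUXSET r {Some v}) \<in> net (s (Suc k))"
  proof (cases rule: main_step_cases)
    case (aux0 Q vf)
    then have "(j, j, AUXSET r (vf ` Q)) \<in> net (s (Suc k))" using rnd j by simp
    then have "vf ` Q = {Some v}" using lockedD(4)[OF locked_always[OF j]] by blast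
    then show ?thesis using aux0(3) rnd by simp
  qed (use pc in simp_all)
qed (use r_pos in simp, use net_Suc in blast)

lemma BVAL1_sent:
  assumes j: "correct j" and "6 * r + 3 < rank (lst k j)"
  shows "(\<forall>i<n. (j, i, BVAL (r, 1) (Some v)) \<in> net (s k)) \<and> (r, 1) \<in> invoked (lst k j)"
proof (rule holds_after_rank[OF assms(2)])
  fix k assume "rank (lst k j) = 6 * r + 3" and "lab k = Main j"
  then have rnd: "rnd (lst k j) = r" and pc: "pc (lst k j) = WAuxSet"
    using rank_eq_iff[of _ r WAuxSet] by auto
  from Main_at[OF \<open>lab k = Main j\<close>] show
    "(\<forall>i<n. (j, i, BVAL (r, 1) (Some v)) \<in> net (s (Suc k))) \<and> (r, 1) \<in> invoked (lst (Suc k) j)"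
  proof (cases rule: main_step_cases)
    case (auxset Q Sf)
    then have "((r, 1), view1_est Q Sf) \<in> bsent (lst (Suc k) j)" using rnd by simp
    then have "view1_est Q Sf = Some v" using lockedD(1)[OF locked_always[OF j]] by blast
    then show ?thesis using auxset(3) rnd by simp
  qed (use pc in simp_all)
qed (use r_pos in simp, use net_Suc invoked_Suc in blast)

lemma AUX1_sent:
  assumes j: "correct j" and "6 * r + 4 < rank (lst k j)"
  shows "\<forall>i<n. (j, i, AUX (r, 1) (Some v)) \<in> net (s k)"
proof (rule holds_after_rank[OF assms(2)])
  fix k assume "rank (lst k j) = 6 * r + 4" and "lab k = Main j"
  then have rnd: "rnd (lst k j) = r" and pc: "pc (lst k j) = WBin1"
    using rank_eq_iff[of _ r WBin1] by auto
  from Main_at[OF \<open>lab k = Main j\<close>] show "\<forall>i<n. (j, i, AUX (r, 1) (Some v)) \<in> net (s (Suc k))"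
    by (cases rule: main_step_cases) (use rnd pc lockedD(2)[OF locked_always[OF j]] in auto)
qed (use r_pos in simp, use net_Suc in blast)

lemma eventually_received_from_correct:
  assumes "reaches m" "correct i"
    and sent: "\<And>j k. correct j \<Longrightarrow> m \<le> rank (lst k j) \<Longrightarrow> (j, i, M) \<in> net (s k)"
  shows "\<forall>\<^sub>F k in sequentially. \<forall>j. correct j \<longrightarrow> (j, M) \<in> rcv (lst k i)"
proof -
  have "\<forall>\<^sub>F k in sequentially. (j, M) \<in> rcv (lst k i)" if j: "correct j" for j
  proof -
    obtain k where "m \<le> rank (lst k j)" using reachesD[OF assms(1) j] by blast
    then have "(j, i, M) \<in> net (s k)" using sent j by blast
    then obtain k' where "(j, M) \<in> rcv (lst k' i)" using fair assms(2) j unfolding fair_def by blast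
    then show ?thesis unfolding eventually_sequentially using rcv_mono by blast
  qed
  then have "\<forall>\<^sub>F k in sequentially. \<forall>j\<in>{j. correct j}. (j, M) \<in> rcv (lst k i)"
    by (intro eventually_ball_finite) auto
  then show ?thesis by simp
qed

text \<open>Once all correct processes' BVAL(T, x) have arrived, at least n - t > 2t senders are
  counted, so the background task keeps AddBin enabled until it fires.\<close>
lemma eventually_in_bin:
  assumes i: "correct i"
    and k0: "bv_rank T \<le> rank (lst k0 i)" "T \<in> invoked (lst k0 i)"
    and rcvd: "\<forall>\<^sub>F k in sequentially. \<forall>j. correct j \<longrightarrow> (j, BVAL T x) \<in> rcv (lst k i)"
  shows "\<forall>\<^sub>F k in sequentially. x \<in> bin (lst k i) T"
proof -
  have "\<exists>k\<ge>k0. x \<in> bin (lst k i) T"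
  proof (rule ccontr)
    assume none: "\<not> ?thesis"
    have "\<forall>\<^sub>F k in sequentially. enabled n t F coin (AddBin i T x) (s k)"
      using rcvd eventually_ge_at_top[of k0]
    proof eventually_elim
      case (elim k)
      have senders: "{j. correct j} \<subseteq> {j. (j, BVAL T x) \<in> rcv (lst k i)}" using elim(1) by blast
      have "finite {j. (j, BVAL T x) \<in> rcv (lst k i)}"
        by (rule finite_subset[of _ "{..<n}"]) (use wf_net_at[of k] in \<open>unfold wf_net_def, blast\<close>, simp)
      then have "card {j. correct j} \<le> bval_count (lst k i) T x"
        unfolding bval_count_def using senders by (rule card_mono)
      then have "2 * t + 1 \<le> bval_count (lst k i) T x" using card_correct n_gt by linarith
      moreover have "T \<in> invoked (lst k i)" using invoked_mono[OF elim(2)] k0(2) by blast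
      ultimately show ?case unfolding enabled_def step_def using i none elim(2) by auto
    qed
    then have "\<exists>\<^sub>F k in sequentially. lab k = AddBin i T x \<and> k0 \<le> k"
      by (intro frequently_eventually_frequently[OF fair_local_action]) simp_all
    then obtain k where "lab k = AddBin i T x" "k0 \<le> k" by (rule frequentlyE) blast
    then have "x \<in> bin (lst (Suc k) i) T" using step_at[of k] by (simp add: step_def)
    then show False using none \<open>k0 \<le> k\<close> le_SucI by blast
  qed
  then obtain k1 where k1: "k0 \<le> k1" "x \<in> bin (lst k1 i) T" by blast
  have "bv_rank T \<le> rank (lst k1 i)" using k0(1) rank_mono[OF k1(1), of i] by simp
  then show ?thesis unfolding eventually_sequentially using bin_mono k1(2) by blast
qed

lemma reaches_round_start: "reaches (6 * r)"
  using start rank_round_start unfolding reaches_def by (metis order_refl)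

lemma reaches_bin0_wait: "reaches (6 * r + 1)"
proof -
  have enabled: "\<forall>\<^sub>F k in sequentially. rank (lst k i) = 6 * r \<longrightarrow> enabled n t F coin (Main i) (s k)"
    if "correct i" for i
    using that by (auto intro!: always_eventually Main_enabledI main_step_exists(1) simp: rank_round_start)
  show ?thesis by (rule reaches_Suc[OF reaches_round_start enabled]) simp_all
qed

lemma eventually_v_in_bin0: "correct i \<Longrightarrow> \<forall>\<^sub>F k in sequentially. Some v \<in> bin (lst k i) (r, 0)"
proof -
  assume i: "correct i"
  obtain k0 where k0: "6 * r + 1 \<le> rank (lst k0 i)" using reachesD[OF reaches_bin0_wait i] by blast
  have "\<forall>\<^sub>F k in sequentially. \<forall>j. correct j \<longrightarrow> (j, BVAL (r, 0) (Some v)) \<in> rcv (lst k i)"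
    by (rule eventually_received_from_correct[OF reaches_bin0_wait i]) (use BVAL0_sent i in auto)
  moreover have "bv_rank (r, 0) \<le> rank (lst k0 i)" "(r, 0) \<in> invoked (lst k0 i)"
    using k0 BVAL0_sent[OF i, of k0] by (simp_all add: bv_rank_def)
  ultimately show ?thesis using eventually_in_bin[OF i] by blast
qed

lemma reaches_aux0_wait: "reaches (6 * r + 2)"
proof -
  have enabled: "\<forall>\<^sub>F k in sequentially. rank (lst k i) = 6 * r + 1 \<longrightarrow> enabled n t F coin (Main i) (s k)"
    if i: "correct i" for i
    using eventually_v_in_bin0[OF i]
  proof eventually_elim
    case (elim k)
    show ?case
    proof
      assume "rank (lst k i) = 6 * r + 1"
      then have "rnd (lst k i) = r" "pc (lst k i) = WBin0" using rank_eq_iff[of _ r WBin0] by auto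
      then show "enabled n t F coin (Main i) (s k)"
        using Main_enabledI[OF _ _ main_step_exists(2)] i elim by simp
    qed
  qed
  show ?thesis by (rule reaches_Suc[OF reaches_bin0_wait enabled]) simp_all
qed

lemma reaches_auxset_wait: "reaches (6 * r + 3)"
proof -
  obtain Q where Q: "Q \<subseteq> {j. correct j}" "card Q = n - t" using correct_quorum by blast
  have enabled: "\<forall>\<^sub>F k in sequentially. rank (lst k i) = 6 * r + 2 \<longrightarrow> enabled n t F coin (Main i) (s k)"
    if i: "correct i" for i
  proof -
    have "\<forall>\<^sub>F k in sequentially. \<forall>j. correct j \<longrightarrow> (j, AUX (r, 0) (Some v)) \<in> rcv (lst k i)"
      by (rule eventually_received_from_correct[OF reaches_aux0_wait i]) (use AUX0_sent i in auto)
    then show ?thesis using eventually_v_in_bin0[OF i]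
    proof eventually_elim
      case (elim k)
      show ?case
      proof
        assume "rank (lst k i) = 6 * r + 2"
        then have "rnd (lst k i) = r" "pc (lst k i) = WAux0" using rank_eq_iff[of _ r WAux0] by auto
        moreover have "aux_ok n t (lst k i) (r, 0) Q (\<lambda>_. Some v)"
          using Q elim by (auto simp: aux_ok_def)
        ultimately show "enabled n t F coin (Main i) (s k)"
          using Main_enabledI[OF _ _ main_step_exists(3)] i by simp
      qed
    qed
  qed
  show ?thesis by (rule reaches_Suc[OF reaches_aux0_wait enabled]) simp_all
qed

lemma reaches_bin1_wait: "reaches (6 * r + 4)"
proof -
  obtain Q where Q: "Q \<subseteq> {j. correct j}" "card Q = n - t" using correct_quorum by blast
  have enabled: "\<forall>\<^sub>F k in sequentially. rank (lst k i) = 6 * r + 3 \<longrightarrow> enabled n t F coin (Main i) (s k)"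
    if i: "correct i" for i
  proof -
    have "\<forall>\<^sub>F k in sequentially. \<forall>j. correct j \<longrightarrow> (j, AUXSET r {Some v}) \<in> rcv (lst k i)"
      by (rule eventually_received_from_correct[OF reaches_auxset_wait i]) (use AUXSET_sent i in auto)
    then show ?thesis using eventually_v_in_bin0[OF i]
    proof eventually_elim
      case (elim k)
      show ?case
      proof
        assume "rank (lst k i) = 6 * r + 3"
        then have "rnd (lst k i) = r" "pc (lst k i) = WAuxSet" using rank_eq_iff[of _ r WAuxSet] by auto
        moreover have "auxset_ok n t (lst k i) r Q (\<lambda>_. {Some v})"
          using Q elim by (auto simp: auxset_ok_def)
        ultimately show "enabled n t F coin (Main i) (s k)"
          using Main_enabledI[OF _ _ main_step_exists(4)] i by simp
      qed
    qed
  qed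
  show ?thesis by (rule reaches_Suc[OF reaches_auxset_wait enabled]) simp_all
qed

lemma eventually_v_in_bin1: "correct i \<Longrightarrow> \<forall>\<^sub>F k in sequentially. Some v \<in> bin (lst k i) (r, 1)"
proof -
  assume i: "correct i"
  obtain k0 where k0: "6 * r + 4 \<le> rank (lst k0 i)" using reachesD[OF reaches_bin1_wait i] by blast
  have "\<forall>\<^sub>F k in sequentially. \<forall>j. correct j \<longrightarrow> (j, BVAL (r, 1) (Some v)) \<in> rcv (lst k i)"
    by (rule eventually_received_from_correct[OF reaches_bin1_wait i]) (use BVAL1_sent i in auto)
  moreover have "bv_rank (r, 1) \<le> rank (lst k0 i)" "(r, 1) \<in> invoked (lst k0 i)"
    using k0 BVAL1_sent[OF i, of k0] by (simp_all add: bv_rank_def)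
  ultimately show ?thesis using eventually_in_bin[OF i] by blast
qed

lemma reaches_aux1_wait: "reaches (6 * r + 5)"
proof -
  have enabled: "\<forall>\<^sub>F k in sequentially. rank (lst k i) = 6 * r + 4 \<longrightarrow> enabled n t F coin (Main i) (s k)"
    if i: "correct i" for i
    using eventually_v_in_bin1[OF i]
  proof eventually_elim
    case (elim k)
    show ?case
    proof
      assume "rank (lst k i) = 6 * r + 4"
      then have "rnd (lst k i) = r" "pc (lst k i) = WBin1" using rank_eq_iff[of _ r WBin1] by auto
      then show "enabled n t F coin (Main i) (s k)"
        using Main_enabledI[OF _ _ main_step_exists(5)] i elim by simp
    qed
  qed
  show ?thesis by (rule reaches_Suc[OF reaches_bin1_wait enabled]) simp_all
qed

lemma reaches_round_end: "reaches (6 * r + 6)"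
proof -
  obtain Q where Q: "Q \<subseteq> {j. correct j}" "card Q = n - t" using correct_quorum by blast
  have enabled: "\<forall>\<^sub>F k in sequentially. rank (lst k i) = 6 * r + 5 \<longrightarrow> enabled n t F coin (Main i) (s k)"
    if i: "correct i" for i
  proof -
    have "\<forall>\<^sub>F k in sequentially. \<forall>j. correct j \<longrightarrow> (j, AUX (r, 1) (Some v)) \<in> rcv (lst k i)"
      by (rule eventually_received_from_correct[OF reaches_aux1_wait i]) (use AUX1_sent i in auto)
    then show ?thesis using eventually_v_in_bin1[OF i]
    proof eventually_elim
      case (elim k)
      show ?case
      proof
        assume "rank (lst k i) = 6 * r + 5"
        then have "rnd (lst k i) = r" "pc (lst k i) = WAux1" using rank_eq_iff[of _ r WAux1] by auto
        moreover have "aux_ok n t (lst k i) (r, 1) Q (\<lambda>_. Some v)"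
          using Q elim by (auto simp: aux_ok_def)
        ultimately show "enabled n t F coin (Main i) (s k)"
          using Main_enabledI[OF _ _ main_step_exists(6)] i by simp
      qed
    qed
  qed
  show ?thesis by (rule reaches_Suc[OF reaches_aux1_wait enabled]) simp_all
qed

text \<open>The rank grows by at most one per step.\<close>
lemma rank_takes_value:
  assumes "m \<le> rank (lst k1 i)" "6 \<le> m"
  shows "\<exists>k. rank (lst k i) = m"
proof -
  have "\<bar>int (rank (lst (k + 1) i)) - int (rank (lst k i))\<bar> \<le> 1" for k
    by (simp add: rank_Suc)
  then obtain k where "int (rank (lst k i)) = int m"
    using nat0_intermed_int_val[of k1 "\<lambda>k. int (rank (lst k i))" "int m"] assms rank_0 by auto
  then show ?thesis by auto
qed

lemma decides_in_round:
  assumes i: "correct i"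
  shows "\<exists>k. (r < rnd (lst k i) \<or> (rnd (lst k i) = r \<and> pc (lst k i) = Start)) \<and>
             (\<exists>w r'. dec (lst k i) = Some (w, r') \<and> (r' < r \<or> (r' = r \<and> w = v)))"
proof -
  obtain k1 where "6 * r + 6 \<le> rank (lst k1 i)" using reachesD[OF reaches_round_end i] by blast
  then obtain k where "rank (lst k i) = 6 * r + 6" using rank_takes_value[of "6 * r + 6"] by auto
  then have round: "rnd (lst k i) = r" "pc (lst k i) = Start" using rank_eq_iff[of _ r Start] by auto
  note D = lockedD(5,6)[OF locked_always[OF i, of k]]
  obtain w q where dec: "dec (lst k i) = Some (w, q)" using D(1) round by auto
  then have "q < r \<or> (q = r \<and> w = v)" using D(2) round by force
  then show ?thesis using round dec by blast
qed

lemma decision_from_round: "correct i \<Longrightarrow> dec (lst k i) = Some (w, r') \<Longrightarrow> r \<le> r' \<Longrightarrow> w = v"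
  using lockedD(6)[OF locked_always] by blast

end

theorem lemma8:
  fixes n t d :: nat and F :: "nat set" and coin :: "nat \<Rightarrow> nat \<Rightarrow> bool"
    and inp :: "nat \<Rightarrow> bool" and s :: "nat \<Rightarrow> gstate" and lab :: "nat \<Rightarrow> action"
    and r :: nat and v :: bool
  assumes "n > 3 * t"
    and "F \<subseteq> {..<n}" and "card F \<le> t"
    and "weak_coin d n F coin"
    and "execution n t F coin inp s lab"
    and "fair n t F coin s lab"
    and "r \<ge> 1"
    and start: "\<forall>i. i < n \<and> i \<notin> F \<longrightarrow>
           (\<exists>k. pc (loc (s k) i) = Start \<and> rnd (loc (s k) i) + 1 = r \<and> est (loc (s k) i) = Some v)"
  shows "(\<forall>i. i < n \<and> i \<notin> F \<longrightarrow>
            (\<exists>k. (r < rnd (loc (s k) i) \<or> (rnd (loc (s k) i) = r \<and> pc (loc (s k) i) = Start)) \<and>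
                 (\<exists>w r'. dec (loc (s k) i) = Some (w, r') \<and> (r' < r \<or> (r' = r \<and> w = v)))))
       \<and> (\<forall>k i w r'. i < n \<and> i \<notin> F \<and> dec (loc (s k) i) = Some (w, r') \<and> r \<le> r' \<longrightarrow> w = v)"
proof -
  interpret unanimous_round n t F coin inp s lab r v
    using assms(1-3,5-7) start by unfold_locales
  show ?thesis using decides_in_round decision_from_round by blast
qed

end
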